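(* For every $k\ge 0$, a permutation $\pi$ is sorted by the left-greedy procedure on the $\mathfrak{D}^k\mathfrak{I}$ machine if and only if $\pi$ avoids the pattern $231$. In particular, $Sort^{(lg)}_k$ is a permutation class with basis $\{231\}$.
   Context: The $\mathfrak{D}^k\mathfrak{I}$ machine consists of $k$ stacks $D_1,\dots,D_k$ (decreasing stacks) followed in series by a stack $I$ (increasing stack). The input permutation is read from left to right. The elements of each $D_i$ must be in decreasing order from top to bottom (top is largest), and those of $I$ in increasing order from top to bottom (top is smallest). Operations: $d_0$ pushes the next input element into $D_1$ (into $I$ if $k=0$); $d_i$ ($1\le i\le k-1$) moves the top of $D_i$ to $D_{i+1}$; $d_k$ moves the top of $D_k$ to $I$; $d_{k+1}$ pops the top of $I$ and appends it to the output. An operation is legal if it respects the stack restrictions; $d_{k+1}$ is legal if the popped element is the smallest among the elements not yet output, and also if no other operation is legal. The left-greedy procedure performs, at each step, the legal operation $d_j$ with the largest index $j$ (priority $d_{k+1}\rhd d_k\rhd\cdots\rhd d_1\rhd d_0$). $Sort^{(lg)}_k$ is the set of permutations whose output under this procedure is the identity. *)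

theory Defs
  imports Main
begin

text \<open>Configuration of the D^k I machine: remaining input (head = next element),
  the decreasing stacks D_1..D_k (ds ! (i-1) = D_i, head = top), the increasing
  stack I (head = top), and the output produced so far (in order).\<close>

record cfg =
  inp  :: "nat list"
  ds   :: "nat list list"
  istk :: "nat list"
  outp :: "nat list"

definition init_cfg :: "nat \<Rightarrow> nat list \<Rightarrow> cfg" where
  "init_cfg k \<pi> = \<lparr>inp = \<pi>, ds = replicate k [], istk = [], outp = []\<rparr>"

text \<open>Legality of the operation d_j for 0 <= j <= k (not the pop d_(k+1)).\<close>
definition legal_move :: "nat \<Rightarrow> cfg \<Rightarrow> nat \<Rightarrow> bool" where
  "legal_move k c j =
    (if j = 0 then
       inp c \<noteq> [] \<and>
       (if k = 0 then istk c = [] \<or> hd (inp c) < hd (istk c)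
        else ds c ! 0 = [] \<or> hd (ds c ! 0) < hd (inp c))
     else if j < k then
       ds c ! (j - 1) \<noteq> [] \<and> (ds c ! j = [] \<or> hd (ds c ! j) < hd (ds c ! (j - 1)))
     else if j = k then
       ds c ! (k - 1) \<noteq> [] \<and> (istk c = [] \<or> hd (ds c ! (k - 1)) < hd (istk c))
     else False)"

definition do_move :: "nat \<Rightarrow> cfg \<Rightarrow> nat \<Rightarrow> cfg" where
  "do_move k c j =
    (if j = 0 then
       (if k = 0 then c\<lparr>inp := tl (inp c), istk := hd (inp c) # istk c\<rparr>
        else c\<lparr>inp := tl (inp c), ds := (ds c)[0 := hd (inp c) # ds c ! 0]\<rparr>)
     else if j < k then
       c\<lparr>ds := ((ds c)[j - 1 := tl (ds c ! (j - 1))])[j := hd (ds c ! (j - 1)) # ds c ! j]\<rparr>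
     else
       c\<lparr>ds := (ds c)[k - 1 := tl (ds c ! (k - 1))], istk := hd (ds c ! (k - 1)) # istk c\<rparr>)"

definition do_pop :: "cfg \<Rightarrow> cfg" where
  "do_pop c = c\<lparr>istk := tl (istk c), outp := outp c @ [hd (istk c)]\<rparr>"

definition pending :: "cfg \<Rightarrow> nat set" where
  "pending c = set (inp c) \<union> (\<Union>s\<in>set (ds c). set s) \<union> set (istk c)"

text \<open>Priority d_(k+1) > d_k > ... > d_0; d_(k+1) is legal if the top of I is the
  smallest pending element, or (I nonempty and) no other operation is legal.\<close>
definition lg_step :: "nat \<Rightarrow> cfg \<Rightarrow> cfg option" where
  "lg_step k c =
    (if istk c \<noteq> [] \<and> hd (istk c) = Min (pending c) then Some (do_pop c)
     else if \<exists>j\<le>k. legal_move k c j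
       then Some (do_move k c (GREATEST j. j \<le> k \<and> legal_move k c j))
     else if istk c \<noteq> [] then Some (do_pop c)
     else None)"

fun lg_run :: "nat \<Rightarrow> nat \<Rightarrow> cfg \<Rightarrow> cfg" where
  "lg_run k 0 c = c"
| "lg_run k (Suc f) c = (case lg_step k c of None \<Rightarrow> c | Some c' \<Rightarrow> lg_run k f c')"

definition lg_sortable :: "nat \<Rightarrow> nat list \<Rightarrow> bool" where
  "lg_sortable k \<pi> =
    (\<exists>f. lg_step k (lg_run k f (init_cfg k \<pi>)) = None \<and>
         outp (lg_run k f (init_cfg k \<pi>)) = [1..<length \<pi> + 1])"

definition is_perm :: "nat list \<Rightarrow> bool" where
  "is_perm \<pi> = (distinct \<pi> \<and> set \<pi> = {1..length \<pi>})"

definition avoids_231 :: "nat list \<Rightarrow> bool" where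
  "avoids_231 \<pi> = (\<not> (\<exists>i j l. i < j \<and> j < l \<and> l < length \<pi> \<and>
                          \<pi> ! l < \<pi> ! i \<and> \<pi> ! i < \<pi> ! j))"

end

theory Submission
  imports Defs
begin

text \<open>Under the left-greedy procedure an element read into D_1 is passed straight down
  through the empty stacks D_2, ..., D_k and into I as soon as this keeps I increasing, before
  the next element is read. So, as long as no element gets stuck at the exit of D_k, the machine
  performs Knuth's stack sort with stack I and terminates with the identity output. The 3 of a
  231 pattern can never enter I: when it arrives the 1 is unread, so the 2 is still in I and
  the top of I is smaller than the 3. Stuck there, it keeps the smallest pending element behind
  it, and an element of I is output before a smaller one whatever the machine does afterwards.\<close>

lemma sorted_wrt_tl: "sorted_wrt R xs \<Longrightarrow> sorted_wrt R (tl xs)"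
  by (cases xs) auto

lemma sorted_wrt_hd: "sorted_wrt R xs \<Longrightarrow> y \<in> set xs \<Longrightarrow> y = hd xs \<or> R (hd xs) y"
  by (cases xs) auto

lemma sorted_wrt_Cons_hd:
  "transp R \<Longrightarrow> sorted_wrt R xs \<Longrightarrow> xs = [] \<or> R x (hd xs) \<Longrightarrow> sorted_wrt R (x # xs)"
  by (cases xs) (auto dest: transpD)

lemma Ball_set_list_update: "\<forall>s\<in>set xs. P s \<Longrightarrow> P v \<Longrightarrow> \<forall>s\<in>set (xs[i := v]). P s"
  using set_update_subset_insert[of xs i v] by auto

lemma nth_replicate_update: "j < k \<Longrightarrow> (replicate k y)[i := v] ! j = (if j = i then v else y)"
  by (simp add: nth_list_update)

lemma replicate_update_same: "(replicate k y)[i := y] = replicate k y"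
  by (cases "i < k") (simp_all add: list_eq_iff_nth_eq nth_list_update)

lemma Union_set_replicate_update:
  "q < k \<Longrightarrow> (\<Union>s\<in>set ((replicate k [])[q := v]). set s) = set v"
proof -
  assume "q < k"
  then have "v \<in> set ((replicate k [])[q := v])" by (simp add: set_update_memI)
  moreover have "set ((replicate k [])[q := v]) \<subseteq> {v, []}"
    using set_update_subset_insert[of "replicate k []" q v] by auto
  ultimately show ?thesis by auto
qed

section \<open>Configurations with a single travelling element\<close>

definition stack_cfg :: "nat \<Rightarrow> nat list \<Rightarrow> nat list \<Rightarrow> nat list \<Rightarrow> cfg" where
  "stack_cfg k xs zs os = \<lparr>inp = xs, ds = replicate k [], istk = zs, outp = os\<rparr>"

text \<open>x travels alone through the decreasing stacks and sits in D_p, where D_0 stands for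
  the head of the input.\<close>
definition carry_cfg :: "nat \<Rightarrow> nat \<Rightarrow> nat \<Rightarrow> nat list \<Rightarrow> nat list \<Rightarrow> nat list \<Rightarrow> cfg" where
  "carry_cfg k p x ys zs os =
     (if p = 0 then stack_cfg k (x # ys) zs os
      else \<lparr>inp = ys, ds = (replicate k [])[p - 1 := [x]], istk = zs, outp = os\<rparr>)"

lemma legal_move_carry_cfg:
  assumes "p \<le> j" "j \<le> k"
  shows "legal_move k (carry_cfg k p x ys zs os) j \<longleftrightarrow> j = p \<and> (p < k \<or> zs = [] \<or> x < hd zs)"
  using assms by (auto simp: legal_move_def carry_cfg_def stack_cfg_def nth_replicate_update)

lemma do_move_carry_cfg_advance:
  "p < k \<Longrightarrow> do_move k (carry_cfg k p x ys zs os) p = carry_cfg k (Suc p) x ys zs os"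
  by (auto simp: do_move_def carry_cfg_def stack_cfg_def nth_replicate_update replicate_update_same)

lemma do_move_carry_cfg_enter:
  "do_move k (carry_cfg k k x ys zs os) k = stack_cfg k ys (x # zs) os"
  by (auto simp: do_move_def carry_cfg_def stack_cfg_def nth_replicate_update replicate_update_same)

lemma do_pop_stack_cfg: "do_pop (stack_cfg k xs zs os) = stack_cfg k xs (tl zs) (os @ [hd zs])"
  by (simp add: do_pop_def stack_cfg_def)

lemma do_pop_carry_cfg:
  "do_pop (carry_cfg k p x ys zs os) = carry_cfg k p x ys (tl zs) (os @ [hd zs])"
  by (simp add: do_pop_def carry_cfg_def stack_cfg_def)

lemma pending_stack_cfg: "pending (stack_cfg k xs zs os) = set xs \<union> set zs"
  by (auto simp: pending_def stack_cfg_def)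

lemma pending_carry_cfg: "p \<le> k \<Longrightarrow> pending (carry_cfg k p x ys zs os) = set (x # ys) \<union> set zs"
  by (cases p) (simp_all add: carry_cfg_def pending_stack_cfg,
    simp add: pending_def Union_set_replicate_update)

definition top_is_min :: "cfg \<Rightarrow> bool" where
  "top_is_min c \<longleftrightarrow> istk c \<noteq> [] \<and> hd (istk c) = Min (pending c)"

lemma lg_step_top_is_min: "top_is_min c \<Longrightarrow> lg_step k c = Some (do_pop c)"
  by (simp add: lg_step_def top_is_min_def)

lemma lg_step_greatest_legal:
  assumes "\<not> top_is_min c" "j \<le> k" "legal_move k c j"
    and "\<And>j'. j < j' \<Longrightarrow> j' \<le> k \<Longrightarrow> \<not> legal_move k c j'"
  shows "lg_step k c = Some (do_move k c j)"
proof -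
  have "(GREATEST j. j \<le> k \<and> legal_move k c j) = j"
    by (rule Greatest_equality) (use assms in \<open>auto simp: not_le[symmetric]\<close>)
  then show ?thesis using assms(1-3) by (auto simp: lg_step_def top_is_min_def)
qed

lemma lg_step_carry_cfg_advance:
  "p < k \<Longrightarrow> \<not> top_is_min (carry_cfg k p x ys zs os) \<Longrightarrow>
    lg_step k (carry_cfg k p x ys zs os) = Some (carry_cfg k (Suc p) x ys zs os)"
  using lg_step_greatest_legal[of "carry_cfg k p x ys zs os" p k]
  by (simp add: legal_move_carry_cfg do_move_carry_cfg_advance)

lemma lg_step_carry_cfg_enter:
  "\<not> top_is_min (carry_cfg k k x ys zs os) \<Longrightarrow> zs = [] \<or> x < hd zs \<Longrightarrow>
    lg_step k (carry_cfg k k x ys zs os) = Some (stack_cfg k ys (x # zs) os)"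
  using lg_step_greatest_legal[of "carry_cfg k k x ys zs os" k k]
  by (simp add: legal_move_carry_cfg do_move_carry_cfg_enter)

lemma lg_step_stack_cfg_Nil: "lg_step k (stack_cfg k [] [] os) = None"
  by (auto simp: lg_step_def stack_cfg_def legal_move_def)

definition lg_shape :: "nat \<Rightarrow> nat list \<Rightarrow> nat list \<Rightarrow> nat list \<Rightarrow> cfg \<Rightarrow> bool" where
  "lg_shape k xs zs os c \<longleftrightarrow>
     (xs = [] \<and> c = stack_cfg k [] zs os) \<or>
     (\<exists>p x ys. p \<le> k \<and> xs = x # ys \<and> c = carry_cfg k p x ys zs os)"

lemma lg_shape_stack_cfg: "lg_shape k xs zs os (stack_cfg k xs zs os)"
  by (cases xs) (auto simp: lg_shape_def carry_cfg_def)

lemma lg_shape_fields: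
  "lg_shape k xs zs os c \<Longrightarrow> istk c = zs \<and> outp c = os \<and> pending c = set xs \<union> set zs"
  by (auto simp: lg_shape_def pending_stack_cfg pending_carry_cfg)
    (auto simp: carry_cfg_def stack_cfg_def)

lemma lg_shape_do_pop:
  "lg_shape k xs zs os c \<Longrightarrow> lg_shape k xs (tl zs) (os @ [hd zs]) (do_pop c)"
  by (auto simp: lg_shape_def do_pop_stack_cfg do_pop_carry_cfg)

text \<open>Each pending element is weighted by the number of operations it still needs
  before it is output.\<close>
definition lg_measure :: "nat \<Rightarrow> cfg \<Rightarrow> nat" where
  "lg_measure k c =
     (k + 2) * length (inp c) + length (istk c) + (\<Sum>i<k. (k + 1 - i) * length (ds c ! i))"

lemma lg_measure_stack_cfg: "lg_measure k (stack_cfg k xs zs os) = (k + 2) * length xs + length zs"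
  by (simp add: lg_measure_def stack_cfg_def)

lemma lg_measure_carry_cfg:
  assumes "p \<le> k"
  shows "lg_measure k (carry_cfg k p x ys zs os) = (k + 2) * length ys + length zs + (k + 2 - p)"
proof (cases p)
  case (Suc q)
  have "(\<Sum>i<k. (k + 1 - i) * length ((replicate k [])[q := [x]] ! i)) =
      (\<Sum>i<k. if i = q then k + 1 - q else 0)"
    by (rule sum.cong) (auto simp: nth_replicate_update)
  also have "\<dots> = k + 1 - q" using Suc assms by simp
  finally show ?thesis using Suc by (simp add: lg_measure_def carry_cfg_def)
qed (simp add: carry_cfg_def lg_measure_stack_cfg)

lemma lg_measure_do_pop: "istk c \<noteq> [] \<Longrightarrow> lg_measure k (do_pop c) < lg_measure k c"
  by (simp add: lg_measure_def do_pop_def)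

section \<open>Doomed runs\<close>

lemma lg_step_cases:
  assumes "lg_step k c = Some c'"
  shows "(istk c \<noteq> [] \<and> c' = do_pop c) \<or> (\<exists>j\<le>k. legal_move k c j \<and> c' = do_move k c j)"
proof -
  let ?P = "\<lambda>j. j \<le> k \<and> legal_move k c j"
  have "\<exists>j. ?P j \<Longrightarrow> ?P (Greatest ?P)"
    using GreatestI_ex_nat[of ?P k] by blast
  then show ?thesis using assms unfolding lg_step_def by (auto split: if_splits)
qed

definition valid_cfg :: "nat \<Rightarrow> cfg \<Rightarrow> bool" where
  "valid_cfg k c \<longleftrightarrow>
     length (ds c) = k \<and> sorted_wrt (<) (istk c) \<and> (\<forall>s\<in>set (ds c). sorted_wrt (>) s)"

lemma valid_cfg_do_pop: "valid_cfg k c \<Longrightarrow> valid_cfg k (do_pop c)"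
  by (auto simp: valid_cfg_def do_pop_def intro: sorted_wrt_tl)

lemma valid_cfg_do_move:
  assumes valid: "valid_cfg k c" and "j \<le> k" and legal: "legal_move k c j"
  shows "valid_cfg k (do_move k c j)"
proof -
  have len: "length (ds c) = k" and I: "sorted_wrt (<) (istk c)"
    and D: "\<forall>s\<in>set (ds c). sorted_wrt (>) s"
    using valid by (auto simp: valid_cfg_def)
  have Di: "i < k \<Longrightarrow> sorted_wrt (>) (ds c ! i)" for i using D len by auto
  consider "j = 0" "k = 0" | "j = 0" "k > 0" | "0 < j" "j < k" | "0 < j" "j = k"
    using \<open>j \<le> k\<close> by linarith
  then show ?thesis
  proof cases
    case 1
    have "sorted_wrt (<) (hd (inp c) # istk c)"
      using legal 1 I by (intro sorted_wrt_Cons_hd) (auto simp: legal_move_def)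
    then show ?thesis using 1 len D by (auto simp: valid_cfg_def do_move_def)
  next
    case 2
    have "sorted_wrt (>) (hd (inp c) # ds c ! 0)"
      using legal 2 Di[of 0] by (intro sorted_wrt_Cons_hd) (auto simp: legal_move_def)
    from Ball_set_list_update[OF D this, of 0] show ?thesis
      using 2 len I by (simp add: valid_cfg_def do_move_def)
  next
    case 3
    have tl: "sorted_wrt (>) (tl (ds c ! (j - 1)))" using 3 Di[of "j - 1"] by (auto intro: sorted_wrt_tl)
    have "sorted_wrt (>) (hd (ds c ! (j - 1)) # ds c ! j)"
      using legal 3 Di[of j] by (intro sorted_wrt_Cons_hd) (auto simp: legal_move_def)
    from Ball_set_list_update[OF Ball_set_list_update[OF D tl, of "j - 1"] this, of j]
    show ?thesis using 3 len I by (simp add: valid_cfg_def do_move_def)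
  next
    case 4
    have tl: "sorted_wrt (>) (tl (ds c ! (k - 1)))" using 4 Di[of "k - 1"] by (auto intro: sorted_wrt_tl)
    have "sorted_wrt (<) (hd (ds c ! (k - 1)) # istk c)"
      using legal 4 I by (intro sorted_wrt_Cons_hd) (auto simp: legal_move_def)
    with Ball_set_list_update[OF D tl, of "k - 1"] show ?thesis
      using 4 len by (simp add: valid_cfg_def do_move_def)
  qed
qed

lemma valid_cfg_lg_step: "valid_cfg k c \<Longrightarrow> lg_step k c = Some c' \<Longrightarrow> valid_cfg k c'"
  using lg_step_cases[of k c c'] valid_cfg_do_pop valid_cfg_do_move by blast

lemma valid_cfg_stack_cfg: "sorted_wrt (<) zs \<Longrightarrow> valid_cfg k (stack_cfg k xs zs os)"
  by (simp add: valid_cfg_def stack_cfg_def)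

lemma valid_cfg_carry_cfg:
  assumes "sorted_wrt (<) zs"
  shows "valid_cfg k (carry_cfg k p x ys zs os)"
proof (cases p)
  case 0
  then show ?thesis using assms by (simp add: carry_cfg_def valid_cfg_stack_cfg)
next
  case (Suc q)
  have "\<forall>s\<in>set ((replicate k [])[q := [x]]). sorted_wrt (>) s"
    by (rule Ball_set_list_update) auto
  then show ?thesis using Suc assms by (simp add: valid_cfg_def carry_cfg_def)
qed

text \<open>The element b waiting to enter I cannot do so while a < b is in I, and anything put on
  D_k above b is larger than b, so y < a stays behind b: a will be output before y.\<close>
definition exit_blocked :: "nat \<Rightarrow> nat \<Rightarrow> nat \<Rightarrow> nat \<Rightarrow> cfg \<Rightarrow> bool" where
  "exit_blocked k a b y c \<longleftrightarrow>
     a \<in> set (istk c) \<and> y \<notin> set (istk c) \<and> y \<notin> set (outp c) \<and>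
     (if k = 0 then inp c \<noteq> [] \<and> hd (inp c) = b
      else b \<in> set (ds c ! (k - 1)) \<and> y \<notin> set (ds c ! (k - 1)))"

definition doomed :: "nat \<Rightarrow> nat \<Rightarrow> nat \<Rightarrow> nat \<Rightarrow> cfg \<Rightarrow> bool" where
  "doomed k a b y c \<longleftrightarrow> y < a \<and> a < b \<and>
     (\<not> sorted (outp c) \<or> (a \<in> set (outp c) \<and> y \<notin> set (outp c)) \<or> exit_blocked k a b y c)"

lemma doomed_do_pop:
  assumes doomed: "doomed k a b y c" and "istk c \<noteq> []"
  shows "doomed k a b y (do_pop c)"
proof -
  let ?h = "hd (istk c)"
  have fields: "outp (do_pop c) = outp c @ [?h]" "istk (do_pop c) = tl (istk c)"
    "inp (do_pop c) = inp c" "ds (do_pop c) = ds c"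
    by (simp_all add: do_pop_def)
  have "?h \<in> set (istk c)" using \<open>istk c \<noteq> []\<close> by simp
  have order: "y < a" "a < b" using doomed by (auto simp: doomed_def)
  consider "\<not> sorted (outp c)" | "a \<in> set (outp c)" "y \<notin> set (outp c)" | "exit_blocked k a b y c"
    using doomed by (auto simp: doomed_def)
  then show ?thesis
  proof cases
    case 2
    have "?h = y \<Longrightarrow> \<not> sorted (outp c @ [?h])" using 2 order by (force simp: sorted_append)
    then show ?thesis using 2 order fields by (cases "?h = y") (auto simp: doomed_def)
  next
    case 3
    have "a \<noteq> ?h \<Longrightarrow> a \<in> set (tl (istk c))"
      using 3 by (cases "istk c") (auto simp: exit_blocked_def)
    moreover have "?h \<noteq> y" using 3 \<open>?h \<in> set (istk c)\<close> by (auto simp: exit_blocked_def)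
    ultimately show ?thesis
      using 3 order fields by (cases "istk c") (auto simp: doomed_def exit_blocked_def)
  qed (use order fields in \<open>auto simp: doomed_def sorted_append\<close>)
qed

lemma do_move_last_stack:
  assumes "length (ds c) = k" "j < k" "legal_move k c j"
  shows "ds (do_move k c j) ! (k - 1) = ds c ! (k - 1) \<or>
    (\<exists>z. ds (do_move k c j) ! (k - 1) = z # ds c ! (k - 1) \<and>
      (ds c ! (k - 1) = [] \<or> hd (ds c ! (k - 1)) < z))"
proof (cases "j = k - 1")
  case True
  then show ?thesis
    using assms by (cases "j = 0") (auto simp: legal_move_def do_move_def nth_list_update)
next
  case False
  then show ?thesis
    using assms by (cases "j = 0") (auto simp: do_move_def nth_list_update)
qed

lemma exit_blocked_do_move:
  assumes valid: "valid_cfg k c" and blocked: "exit_blocked k a b y c" and "y < a" "a < b"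
    and "j \<le> k" and legal: "legal_move k c j"
  shows "exit_blocked k a b y (do_move k c j)"
proof -
  have len: "length (ds c) = k" and I: "sorted_wrt (<) (istk c)"
    and D: "\<forall>s\<in>set (ds c). sorted_wrt (>) s"
    using valid by (auto simp: valid_cfg_def)
  have "a \<in> set (istk c)" using blocked by (simp add: exit_blocked_def)
  then have "istk c \<noteq> []" "hd (istk c) \<le> a" using sorted_wrt_hd[OF I] by fastforce+
  show ?thesis
  proof (cases "k = 0")
    case True
    then show ?thesis
      using legal blocked \<open>hd (istk c) \<le> a\<close> \<open>a < b\<close> \<open>j \<le> k\<close> \<open>istk c \<noteq> []\<close>
      by (auto simp: legal_move_def exit_blocked_def)
  next
    case False
    let ?Dk = "ds c ! (k - 1)"
    have b: "b \<in> set ?Dk" "y \<notin> set ?Dk" using blocked False by (auto simp: exit_blocked_def)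
    have "sorted_wrt (>) ?Dk" using D len False by simp
    then have "?Dk \<noteq> []" "b \<le> hd ?Dk" using sorted_wrt_hd b(1) by fastforce+
    have "j < k"
    proof (rule ccontr)
      assume "\<not> j < k"
      then have "hd ?Dk < hd (istk c)"
        using legal \<open>j \<le> k\<close> False \<open>istk c \<noteq> []\<close> by (auto simp: legal_move_def)
      then show False using \<open>b \<le> hd ?Dk\<close> \<open>hd (istk c) \<le> a\<close> \<open>a < b\<close> by simp
    qed
    have "b \<in> set (ds (do_move k c j) ! (k - 1)) \<and> y \<notin> set (ds (do_move k c j) ! (k - 1))"
      using do_move_last_stack[OF len \<open>j < k\<close> legal] b \<open>?Dk \<noteq> []\<close> \<open>b \<le> hd ?Dk\<close>
        \<open>y < a\<close> \<open>a < b\<close>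
      by auto
    then show ?thesis
      using blocked \<open>j < k\<close> False by (auto simp: exit_blocked_def do_move_def)
  qed
qed

lemma doomed_lg_step:
  "valid_cfg k c \<Longrightarrow> doomed k a b y c \<Longrightarrow> lg_step k c = Some c' \<Longrightarrow> doomed k a b y c'"
proof -
  assume valid: "valid_cfg k c" and doomed: "doomed k a b y c" and step: "lg_step k c = Some c'"
  have "outp (do_move k c j) = outp c" for j by (simp add: do_move_def)
  then have "doomed k a b y (do_move k c j)" if "j \<le> k" "legal_move k c j" for j
    using doomed exit_blocked_do_move[OF valid _ _ _ that] by (auto simp: doomed_def)
  then show ?thesis using lg_step_cases[OF step] doomed_do_pop[OF doomed] by blast
qed

lemma doomed_lg_run: "valid_cfg k c \<Longrightarrow> doomed k a b y c \<Longrightarrow> doomed k a b y (lg_run k f c)"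
proof (induction f arbitrary: c)
  case (Suc f)
  then show ?case
    by (cases "lg_step k c") (auto intro: valid_cfg_lg_step doomed_lg_step)
qed simp

lemma doomed_outp_not_upt:
  "doomed k a b y c \<Longrightarrow> y \<in> {1..n} \<Longrightarrow> outp c \<noteq> [1..<n + 1]"
  by (auto simp: doomed_def exit_blocked_def simp del: upt_Suc)

lemma doomed_carry_cfg:
  "zs \<noteq> [] \<Longrightarrow> y < hd zs \<Longrightarrow> hd zs < x \<Longrightarrow> y \<notin> set zs \<Longrightarrow> y \<notin> set os \<Longrightarrow>
    doomed k (hd zs) x y (carry_cfg k k x ys zs os)"
  by (auto simp: doomed_def exit_blocked_def carry_cfg_def stack_cfg_def nth_replicate_update)

section \<open>Stack sorting and 231 patterns\<close>

definition is_231_peak :: "nat list \<Rightarrow> nat \<Rightarrow> bool" where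
  "is_231_peak \<pi> v \<longleftrightarrow> (\<exists>i j l. i < j \<and> j < l \<and> l < length \<pi> \<and>
     \<pi> ! l < \<pi> ! i \<and> \<pi> ! i < \<pi> ! j \<and> \<pi> ! j = v)"

lemma avoids_231_iff_no_peak: "avoids_231 \<pi> \<longleftrightarrow> (\<forall>v. \<not> is_231_peak \<pi> v)"
  by (auto simp: avoids_231_def is_231_peak_def)

lemma is_231_peak_split:
  assumes "distinct (pre @ x # ys)"
  shows "is_231_peak (pre @ x # ys) x \<longleftrightarrow> (\<exists>t\<in>set pre. \<exists>y\<in>set ys. y < t \<and> t < x)"
    (is "is_231_peak ?\<pi> x \<longleftrightarrow> _")
proof
  assume "is_231_peak ?\<pi> x"
  then obtain i j l where ijl: "i < j" "j < l" "l < length ?\<pi>" "?\<pi> ! l < ?\<pi> ! i"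
    "?\<pi> ! i < ?\<pi> ! j" "?\<pi> ! j = x"
    unfolding is_231_peak_def by blast
  have "length pre < length ?\<pi>" "?\<pi> ! length pre = x" by simp_all
  then have j: "j = length pre"
    using ijl(2,3,6) nth_eq_iff_index_eq[OF assms, of j "length pre"] by simp
  obtain m where m: "l = Suc (length pre) + m" using ijl(2) j less_iff_Suc_add by auto
  have "?\<pi> ! i = pre ! i" "i < length pre" using ijl(1) j by (simp_all add: nth_append)
  moreover have "?\<pi> ! l = ys ! m" "m < length ys" using ijl(3) m by (simp_all add: nth_append)
  ultimately show "\<exists>t\<in>set pre. \<exists>y\<in>set ys. y < t \<and> t < x"
    using ijl(4,5,6) j by (metis nth_mem)
next
  assume "\<exists>t\<in>set pre. \<exists>y\<in>set ys. y < t \<and> t < x"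
  then obtain i l where il: "i < length pre" "l < length ys" "ys ! l < pre ! i" "pre ! i < x"
    by (auto simp: in_set_conv_nth)
  moreover have "?\<pi> ! i = pre ! i" "?\<pi> ! length pre = x" "?\<pi> ! (length pre + Suc l) = ys ! l"
    using il(1) by (simp_all add: nth_append)
  ultimately show "is_231_peak ?\<pi> x" unfolding is_231_peak_def
    by (intro exI[of _ i] exI[of _ "length pre"] exI[of _ "length pre + Suc l"]) simp
qed

lemma set_upt_1: "set [1..<n + 1] = {1..n}"
  by (simp add: atLeastLessThanSuc_atLeastAtMost del: upt_Suc)

lemma hd_eq_Min_if_sorted_wrt: "sorted_wrt (<) zs \<Longrightarrow> zs \<noteq> [] \<Longrightarrow> hd zs = Min (set (zs :: nat list))"
  by (cases zs) (auto intro!: Min_eqI[symmetric])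

text \<open>Knuth's stack sort, seen from the left-greedy run: pre has been pushed into I, xs is
  the rest of the input (its head possibly on the way through the decreasing stacks), zs is I
  and os the output.\<close>
definition stack_state :: "nat list \<Rightarrow> nat list \<Rightarrow> nat list \<Rightarrow> nat list \<Rightarrow> nat list \<Rightarrow> bool" where
  "stack_state \<pi> pre xs zs os \<longleftrightarrow>
     \<pi> = pre @ xs \<and> distinct (xs @ zs @ os) \<and> set (xs @ zs @ os) = {1..length \<pi>} \<and>
     os = [1..<length os + 1] \<and> sorted_wrt (<) zs \<and>
     (\<forall>v \<in> set zs \<union> set os. \<not> is_231_peak \<pi> v)"

lemma stack_state_pending:
  assumes "stack_state \<pi> pre xs zs os"
  shows "set xs \<union> set zs = {length os + 1..length \<pi>}"
proof -
  have os: "set os = {1..length os}" using assms set_upt_1 unfolding stack_state_def by metis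
  have disj: "set os \<inter> (set xs \<union> set zs) = {}"
    and all: "set xs \<union> set zs \<union> set os = {1..length \<pi>}"
    using assms by (auto simp: stack_state_def)
  show ?thesis
  proof (intro set_eqI iffI)
    fix y assume "y \<in> set xs \<union> set zs"
    then have "y \<in> {1..length \<pi>}" "y \<notin> {1..length os}" using all disj os by blast+
    then show "y \<in> {length os + 1..length \<pi>}" by auto
  next
    fix y assume "y \<in> {length os + 1..length \<pi>}"
    then show "y \<in> set xs \<union> set zs" using all os by auto
  qed
qed

lemma stack_state_read:
  assumes "is_perm \<pi>" "stack_state \<pi> pre xs zs os"
  shows "set pre \<subseteq> set zs \<union> set os"
proof -
  have "set pre \<inter> set xs = {}" "set pre \<subseteq> {1..length \<pi>}"
    using assms by (auto simp: stack_state_def is_perm_def)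
  moreover have "set xs \<union> set zs \<union> set os = {1..length \<pi>}"
    using assms by (auto simp: stack_state_def)
  ultimately show ?thesis by blast
qed

lemma stack_state_pop:
  assumes state: "stack_state \<pi> pre xs zs os" and "zs \<noteq> []"
    and min: "hd zs = Min (set xs \<union> set zs)"
  shows "stack_state \<pi> pre xs (tl zs) (os @ [hd zs])"
proof -
  note pending = stack_state_pending[OF state]
  obtain z zs' where zs: "zs = z # zs'" using \<open>zs \<noteq> []\<close> by (cases zs) auto
  have "z \<in> {length os + 1..length \<pi>}" using pending zs by auto
  then have "Min {length os + 1..length \<pi>} = length os + 1" by (intro Min_eqI) auto
  then have "z = length os + 1" using min pending zs by simp
  moreover have "os = [1..<length os + 1]" using state by (simp add: stack_state_def)
  ultimately have "os @ [z] = [1..<length (os @ [z]) + 1]"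
    by (metis length_append_singleton add_Suc_right upt_Suc_append le_add2 add.commute Suc_eq_plus1)
  moreover have "distinct (xs @ zs' @ os @ [z])" "set (xs @ zs' @ os @ [z]) = {1..length \<pi>}"
    "\<pi> = pre @ xs" "sorted_wrt (<) zs'" "\<forall>v \<in> set zs' \<union> set (os @ [z]). \<not> is_231_peak \<pi> v"
    using state zs by (auto simp: stack_state_def simp del: upt_Suc)
  ultimately show ?thesis using zs by (simp add: stack_state_def del: upt_Suc)
qed

lemma stack_state_push:
  assumes perm: "is_perm \<pi>" and state: "stack_state \<pi> pre (x # ys) zs os"
    and enter: "zs = [] \<or> x < hd zs"
  shows "stack_state \<pi> (pre @ [x]) ys (x # zs) os"
proof -
  have \<pi>: "\<pi> = pre @ x # ys" and os: "set os = {1..length os}"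
    using state set_upt_1 unfolding stack_state_def by metis+
  have "\<not> is_231_peak \<pi> x"
  proof
    assume "is_231_peak \<pi> x"
    then obtain t y where "t \<in> set pre" "y \<in> set ys" "y < t" "t < x"
      using is_231_peak_split perm \<pi> by (metis is_perm_def)
    moreover have "y \<in> {length os + 1..length \<pi>}"
      using stack_state_pending[OF state] \<open>y \<in> set ys\<close> by (metis UnI1 list.set_intros(2))
    then have "length os < y" by simp
    ultimately have "t \<in> set zs"
      using stack_state_read[OF perm state] os by auto
    then have "hd zs \<le> t" "zs \<noteq> []"
      using sorted_wrt_hd[of "(<)" zs t] state by (auto simp: stack_state_def)
    then show False using enter \<open>t < x\<close> by simp
  qed
  then show ?thesis
    using state enter sorted_wrt_Cons_hd[of "(<)" zs x] by (auto simp: stack_state_def)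
qed

lemma stack_state_Nil:
  assumes "stack_state \<pi> pre [] [] os"
  shows "os = [1..<length \<pi> + 1]"
proof -
  have os: "os = [1..<length os + 1]" and "set os = {1..length \<pi>}"
    using assms by (auto simp: stack_state_def simp del: upt_Suc)
  then have "{1..length \<pi>} = {1..length os}" by (metis set_upt_1)
  then have "length os = length \<pi>" by (metis card_atLeastAtMost diff_Suc_1)
  then show ?thesis using os by simp
qed

lemma stack_state_blocked:
  assumes perm: "is_perm \<pi>" and state: "stack_state \<pi> pre (x # ys) zs os"
    and "zs \<noteq> []" and "\<not> x < hd zs" and not_min: "hd zs \<noteq> Min (set (x # ys) \<union> set zs)"
  shows "\<exists>y\<in>set ys. y < hd zs \<and> hd zs < x \<and> is_231_peak \<pi> x"
proof -
  let ?m = "Min (set (x # ys) \<union> set zs)"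
  have \<pi>: "\<pi> = pre @ x # ys" and dist: "distinct (x # ys @ zs @ os)"
    and sorted: "sorted_wrt (<) zs"
    using state by (auto simp: stack_state_def)
  have "hd zs \<in> set zs" using \<open>zs \<noteq> []\<close> by simp
  then have "hd zs < x" using \<open>\<not> x < hd zs\<close> dist by (cases "hd zs = x") auto
  have "?m \<le> hd zs" using \<open>hd zs \<in> set zs\<close> by (intro Min_le) auto
  then have "?m < hd zs" using not_min by simp
  moreover have "?m \<in> set (x # ys) \<union> set zs" by (intro Min_in) auto
  moreover have "?m \<notin> set zs" using sorted_wrt_hd[OF sorted] \<open>?m < hd zs\<close> by fastforce
  ultimately have m: "?m \<in> set ys" "?m < hd zs" using \<open>hd zs < x\<close> by auto
  have "hd zs \<in> set \<pi>" using state \<open>hd zs \<in> set zs\<close> perm by (auto simp: stack_state_def is_perm_def)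
  then have "hd zs \<in> set pre" using \<pi> dist \<open>hd zs \<in> set zs\<close> by auto
  then have "is_231_peak \<pi> x"
    using is_231_peak_split[of pre x ys] perm \<pi> m \<open>hd zs < x\<close> by (auto simp: is_perm_def)
  then show ?thesis using m \<open>hd zs < x\<close> by blast
qed

section \<open>The invariant of the left-greedy run\<close>

definition lg_invariant :: "nat list \<Rightarrow> nat \<Rightarrow> cfg \<Rightarrow> bool" where
  "lg_invariant \<pi> k c \<longleftrightarrow> (\<exists>pre xs zs os. stack_state \<pi> pre xs zs os \<and> lg_shape k xs zs os c)"

lemma lg_invariant_init_cfg: "is_perm \<pi> \<Longrightarrow> lg_invariant \<pi> k (init_cfg k \<pi>)"
proof -
  assume "is_perm \<pi>"
  then have "stack_state \<pi> [] \<pi> [] []" by (simp add: stack_state_def is_perm_def)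
  moreover have "init_cfg k \<pi> = stack_cfg k \<pi> [] []" by (simp add: init_cfg_def stack_cfg_def)
  ultimately show ?thesis unfolding lg_invariant_def by (metis lg_shape_stack_cfg)
qed

lemma lg_invariant_outp: "lg_invariant \<pi> k c \<Longrightarrow> v \<in> set (outp c) \<Longrightarrow> \<not> is_231_peak \<pi> v"
  by (auto simp: lg_invariant_def stack_state_def dest: lg_shape_fields)

lemma lg_invariant_pop:
  assumes "stack_state \<pi> pre xs zs os" "lg_shape k xs zs os c" "top_is_min c"
  shows "\<exists>c'. lg_step k c = Some c' \<and> lg_invariant \<pi> k c' \<and> lg_measure k c' < lg_measure k c"
proof -
  have "zs \<noteq> []" "hd zs = Min (set xs \<union> set zs)"
    using assms(3) lg_shape_fields[OF assms(2)] by (auto simp: top_is_min_def)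
  then have "lg_invariant \<pi> k (do_pop c)"
    using stack_state_pop[OF assms(1)] lg_shape_do_pop[OF assms(2)] by (auto simp: lg_invariant_def)
  moreover have "lg_measure k (do_pop c) < lg_measure k c"
    using assms(3) by (simp add: lg_measure_do_pop top_is_min_def)
  ultimately show ?thesis using lg_step_top_is_min[OF assms(3)] by blast
qed

lemma lg_invariant_carry_cfg:
  fixes k p x :: nat and ys zs os :: "nat list"
  defines "c \<equiv> carry_cfg k p x ys zs os"
  assumes perm: "is_perm \<pi>" and state: "stack_state \<pi> pre (x # ys) zs os" and "p \<le> k"
    and not_min: "\<not> top_is_min c"
  shows "(\<exists>c'. lg_step k c = Some c' \<and> lg_invariant \<pi> k c' \<and> lg_measure k c' < lg_measure k c) \<or>
    (\<not> avoids_231 \<pi> \<and> valid_cfg k c \<and> (\<exists>a b y. y \<in> {1..length \<pi>} \<and> doomed k a b y c))"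
proof -
  consider "p < k" | "p = k" "zs = [] \<or> x < hd zs" | "p = k" "zs \<noteq> []" "\<not> x < hd zs"
    using \<open>p \<le> k\<close> by linarith
  then show ?thesis
  proof cases
    case 1
    have "lg_shape k (x # ys) zs os (carry_cfg k (Suc p) x ys zs os)"
      using 1 unfolding lg_shape_def by (metis Suc_leI)
    then show ?thesis
      using 1 state lg_step_carry_cfg_advance[OF 1] not_min
      by (auto simp: c_def lg_invariant_def lg_measure_carry_cfg)
  next
    case 2
    have "lg_invariant \<pi> k (stack_cfg k ys (x # zs) os)"
      using stack_state_push[OF perm state 2(2)] lg_shape_stack_cfg unfolding lg_invariant_def by blast
    then show ?thesis
      using 2 lg_step_carry_cfg_enter not_min
      by (auto simp: c_def lg_measure_carry_cfg lg_measure_stack_cfg)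
  next
    case 3
    have "lg_shape k (x # ys) zs os c" using \<open>p \<le> k\<close> by (auto simp: lg_shape_def c_def)
    then have "hd zs \<noteq> Min (set (x # ys) \<union> set zs)"
      using not_min 3 by (simp add: top_is_min_def lg_shape_fields)
    then obtain y where y: "y \<in> set ys" "y < hd zs" "hd zs < x" and "is_231_peak \<pi> x"
      using stack_state_blocked[OF perm state 3(2,3)] by blast
    then have "\<not> avoids_231 \<pi>" by (auto simp: avoids_231_iff_no_peak)
    moreover have "y \<notin> set zs" "y \<notin> set os" "y \<in> {1..length \<pi>}"
      using state y(1) by (auto simp: stack_state_def)
    then have "doomed k (hd zs) x y c"
      using doomed_carry_cfg[OF 3(2) y(2,3)] 3 by (simp add: c_def)
    moreover have "valid_cfg k c"
      using state by (simp add: c_def valid_cfg_carry_cfg stack_state_def)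
    ultimately show ?thesis using \<open>y \<in> {1..length \<pi>}\<close> by blast
  qed
qed

lemma lg_invariant_lg_step:
  assumes perm: "is_perm \<pi>" and "lg_invariant \<pi> k c"
  shows "(lg_step k c = None \<and> outp c = [1..<length \<pi> + 1]) \<or>
    (\<exists>c'. lg_step k c = Some c' \<and> lg_invariant \<pi> k c' \<and> lg_measure k c' < lg_measure k c) \<or>
    (\<not> avoids_231 \<pi> \<and> valid_cfg k c \<and> (\<exists>a b y. y \<in> {1..length \<pi>} \<and> doomed k a b y c))"
proof -
  obtain pre xs zs os where state: "stack_state \<pi> pre xs zs os" and shape: "lg_shape k xs zs os c"
    using assms(2) by (auto simp: lg_invariant_def)
  show ?thesis
  proof (cases "top_is_min c")
    case True
    then show ?thesis using lg_invariant_pop[OF state shape] by blast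
  next
    case False
    from shape consider "xs = []" "c = stack_cfg k [] zs os"
      | p x ys where "p \<le> k" "xs = x # ys" "c = carry_cfg k p x ys zs os"
      by (auto simp: lg_shape_def)
    then show ?thesis
    proof cases
      case 1
      have "zs = []"
      proof (rule ccontr)
        assume "zs \<noteq> []"
        then have "top_is_min c"
          using 1 state lg_shape_fields[OF shape]
          by (simp add: top_is_min_def stack_state_def hd_eq_Min_if_sorted_wrt)
        then show False using False by simp
      qed
      then show ?thesis
        using 1 stack_state_Nil state lg_step_stack_cfg_Nil by (simp add: stack_cfg_def)
    next
      case 2
      then show ?thesis using lg_invariant_carry_cfg[OF perm _ 2(1)] state False by simp
    qed
  qed
qed

lemma lg_run_sorts:
  assumes "avoids_231 \<pi>" "is_perm \<pi>"
  shows "lg_invariant \<pi> k c \<Longrightarrow>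
    \<exists>f. lg_step k (lg_run k f c) = None \<and> outp (lg_run k f c) = [1..<length \<pi> + 1]"
proof (induction "lg_measure k c" arbitrary: c rule: less_induct)
  case less
  from lg_invariant_lg_step[OF assms(2) less.prems] assms(1) show ?case
  proof (elim disjE conjE exE)
    assume "lg_step k c = None" "outp c = [1..<length \<pi> + 1]"
    then show ?thesis by (intro exI[of _ 0]) simp
  next
    fix c' assume "lg_step k c = Some c'" "lg_invariant \<pi> k c'" "lg_measure k c' < lg_measure k c"
    then show ?thesis using less.hyps by (metis lg_run.simps(2) option.simps(5))
  qed simp
qed

lemma lg_run_invariant_or_doomed:
  assumes "is_perm \<pi>"
  shows "lg_invariant \<pi> k c \<Longrightarrow>
    lg_invariant \<pi> k (lg_run k f c) \<or> (\<exists>a b y. y \<in> {1..length \<pi>} \<and> doomed k a b y (lg_run k f c))"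
proof (induction f arbitrary: c)
  case (Suc f)
  from lg_invariant_lg_step[OF assms Suc.prems] show ?case
  proof (elim disjE conjE exE)
    assume "lg_step k c = None"
    then show ?thesis using Suc.prems by simp
  next
    fix c' assume "lg_step k c = Some c'" "lg_invariant \<pi> k c'"
    then show ?thesis using Suc.IH[of c'] by simp
  next
    fix a b y assume "valid_cfg k c" "y \<in> {1..length \<pi>}" "doomed k a b y c"
    then show ?thesis using doomed_lg_run by blast
  qed
qed simp

theorem mainTheorem12:
  fixes k :: nat and \<pi> :: "nat list"
  assumes "is_perm \<pi>"
  shows "lg_sortable k \<pi> \<longleftrightarrow> avoids_231 \<pi>"
proof
  assume "lg_sortable k \<pi>"
  then obtain f where sorted: "outp (lg_run k f (init_cfg k \<pi>)) = [1..<length \<pi> + 1]"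
    unfolding lg_sortable_def by blast
  show "avoids_231 \<pi>"
  proof (rule ccontr)
    assume "\<not> avoids_231 \<pi>"
    then obtain v where "is_231_peak \<pi> v" by (auto simp: avoids_231_iff_no_peak)
    then have "v \<in> {1..length \<pi>}"
      using assms by (fastforce simp: is_231_peak_def is_perm_def)
    then have "\<not> lg_invariant \<pi> k (lg_run k f (init_cfg k \<pi>))"
      using sorted lg_invariant_outp \<open>is_231_peak \<pi> v\<close> by (fastforce simp del: upt_Suc)
    then show False
      using lg_run_invariant_or_doomed[OF assms lg_invariant_init_cfg[OF assms]] sorted
        doomed_outp_not_upt by blast
  qed
next
  assume "avoids_231 \<pi>"
  then show "lg_sortable k \<pi>"
    using lg_run_sorts assms lg_invariant_init_cfg unfolding lg_sortable_def by blast
qed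

end
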